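(* Let $Y$ be a finite-dimensional real Hilbert space, $J:Y\to\mathbb{R}$ a $C^1$ function with locally Lipschitzian derivative, and $\varphi:Y\to[0,+\infty[$ a $C^1$ convex function whose derivative is locally Lipschitzian at $0$, with $\varphi^{-1}(0)=\{0\}$. Then, for each $x_0\in Y$ for which $J'(x_0)\neq 0$, there exists $\delta>0$ such that, for each $r\in\,]0,\delta[$, the restriction of $J$ to $B(x_0,r)$ has a unique global minimum $u_r$, and it satisfies $$J(u_r)\leq J(x)-\varphi(x-u_r)$$ for all $x\in B(x_0,r)$, where $B(x_0,r)=\{x\in Y:\|x-x_0\|\leq r\}$. *)

theory Defs
  imports "HOL-Analysis.Analysis"
begin

definition lipschitz_near :: "('a::metric_space \<Rightarrow> 'b::metric_space) \<Rightarrow> 'a \<Rightarrow> bool" where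
  "lipschitz_near f x \<longleftrightarrow>
     (\<exists>r>0. \<exists>L. \<forall>y\<in>ball x r. \<forall>z\<in>ball x r. dist (f y) (f z) \<le> L * dist y z)"

definition locally_lipschitz :: "('a::metric_space \<Rightarrow> 'b::metric_space) \<Rightarrow> bool" where
  "locally_lipschitz f \<longleftrightarrow> (\<forall>x. lipschitz_near f x)"

end

theory Submission
  imports Defs
begin

text \<open>
  Let \<open>u\<close> minimise \<open>J\<close> on the ball \<open>B(x\<^sub>0, r)\<close>. For small \<open>r\<close> we have \<open>J'(u) \<noteq> 0\<close>, and the
  first-order condition \<open>J'(u)(x - u) \<ge> 0\<close> on the ball forces \<open>u\<close> to be the boundary point at which
  \<open>\<nabla>J(u)\<close> is the inner normal; the geometry of the ball then gives
  \<open>J'(u)(x - u) \<ge> \<parallel>J'(u)\<parallel> / (2r) \<cdot> \<parallel>x - u\<parallel>\<^sup>2\<close>. Since \<open>\<parallel>J'\<parallel>\<close> stays away from \<open>0\<close> near \<open>x\<^sub>0\<close> while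
  the Lipschitz bound on \<open>J'\<close> only costs \<open>L \<parallel>x - u\<parallel>\<^sup>2\<close>, \<open>J\<close> grows from \<open>u\<close> like \<open>\<parallel>x - u\<parallel>\<^sup>2\<close> with a
  constant of order \<open>1/r\<close>. On the other hand \<open>\<phi>(h) \<le> K \<parallel>h\<parallel>\<^sup>2\<close> near \<open>0\<close>, as \<open>\<phi>\<close> is convex, minimal
  at \<open>0\<close> and has Lipschitz derivative there. So \<open>J(x) - J(u) \<ge> \<phi>(x - u)\<close> once \<open>r\<close> is small, and
  uniqueness of the minimiser follows from \<open>\<phi>\<^sup>-\<^sup>1(0) = {0}\<close>.
\<close>

lemma lipschitz_nearE:
  assumes "lipschitz_near f x"
  obtains r L where "0 < r" "0 \<le> L"
    and "\<And>y z. y \<in> ball x r \<Longrightarrow> z \<in> ball x r \<Longrightarrow> dist (f y) (f z) \<le> L * dist y z"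
proof -
  obtain r L where "0 < r" and L: "\<forall>y\<in>ball x r. \<forall>z\<in>ball x r. dist (f y) (f z) \<le> L * dist y z"
    using assms unfolding lipschitz_near_def by blast
  have "dist (f y) (f z) \<le> \<bar>L\<bar> * dist y z" if "y \<in> ball x r" "z \<in> ball x r" for y z
    using L that by (meson abs_ge_self mult_right_mono order_trans zero_le_dist)
  with \<open>0 < r\<close> show thesis
    using that[of r "\<bar>L\<bar>"] by simp
qed

lemma isCont_norm_bounded_below_near:
  fixes f :: "'a::metric_space \<Rightarrow> 'b::real_normed_vector"
  assumes "isCont f x" and "f x \<noteq> 0"
  obtains R where "0 < R" and "\<And>y. y \<in> ball x R \<Longrightarrow> norm (f x) / 2 \<le> norm (f y)"
proof -
  obtain R where "0 < R" and R: "\<And>y. dist y x < R \<Longrightarrow> dist (f y) (f x) < norm (f x) / 2"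
    using assms unfolding continuous_at_eps_delta by (meson half_gt_zero zero_less_norm_iff)
  have "norm (f x) / 2 \<le> norm (f y)" if "y \<in> ball x R" for y
    using R[of y] that norm_triangle_ineq2[of "f x" "f y"]
    by (simp add: dist_commute dist_norm norm_minus_commute)
  with \<open>0 < R\<close> show thesis
    using that by blast
qed

lemma has_real_derivative_along_line:
  fixes f :: "'a::real_normed_vector \<Rightarrow> real"
  assumes "(f has_derivative blinfun_apply (f' (u + t *\<^sub>R h))) (at (u + t *\<^sub>R h))"
  shows "((\<lambda>t. f (u + t *\<^sub>R h)) has_real_derivative f' (u + t *\<^sub>R h) h) (at t)"
proof -
  have "((\<lambda>t. u + t *\<^sub>R h) has_derivative (\<lambda>s. s *\<^sub>R h)) (at t)"
    by (auto intro!: derivative_eq_intros)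
  from has_derivative_compose[OF this assms]
  show ?thesis
    by (simp add: has_field_derivative_def blinfun.scaleR_right mult_commute_abs)
qed

lemma convex_on_along_line:
  fixes f :: "'a::real_vector \<Rightarrow> real"
  assumes "convex_on UNIV f"
  shows "convex_on UNIV (\<lambda>t::real. f (u + t *\<^sub>R h))"
proof (rule convex_onI)
  fix t x y :: real
  assume "0 < t" "t < 1"
  have "u + ((1 - t) *\<^sub>R x + t *\<^sub>R y) *\<^sub>R h = (1 - t) *\<^sub>R (u + x *\<^sub>R h) + t *\<^sub>R (u + y *\<^sub>R h)"
    by (simp add: algebra_simps)
  then show "f (u + ((1 - t) *\<^sub>R x + t *\<^sub>R y) *\<^sub>R h) \<le> (1 - t) * f (u + x *\<^sub>R h) + t * f (u + y *\<^sub>R h)"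
    using convex_onD[OF assms, of t] \<open>0 < t\<close> \<open>t < 1\<close> by simp
qed simp

lemma convex_on_above_tangent:
  fixes f :: "'a::real_normed_vector \<Rightarrow> real"
  assumes "convex_on UNIV f" and "(f has_derivative blinfun_apply f') (at x)"
  shows "f x + f' (y - x) \<le> f y"
proof -
  have "((\<lambda>t. f (x + t *\<^sub>R (y - x))) has_real_derivative f' (y - x)) (at 0 within UNIV)"
    using has_real_derivative_along_line[of f "\<lambda>_. f'" x 0 "y - x"] assms(2) by simp
  from convex_on_imp_above_tangent[OF convex_on_along_line[OF assms(1)] _ _ _ this, of 1]
  show ?thesis by simp
qed

lemma quadratic_bound_near_zero:
  fixes \<phi> :: "'a::real_normed_vector \<Rightarrow> real"
  assumes nonneg: "\<And>x. 0 \<le> \<phi> x" and zero: "\<phi> 0 = 0"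
    and deriv: "\<And>x. (\<phi> has_derivative blinfun_apply (\<phi>' x)) (at x)"
    and convex: "convex_on UNIV \<phi>"
    and lip: "lipschitz_near \<phi>' 0"
  shows "\<exists>\<rho>>0. \<exists>K\<ge>0. \<forall>h. norm h < \<rho> \<longrightarrow> \<phi> h \<le> K * (norm h)\<^sup>2"
proof -
  obtain \<rho> L where "0 < \<rho>" "0 \<le> L"
    and L: "\<And>y z. y \<in> ball 0 \<rho> \<Longrightarrow> z \<in> ball 0 \<rho> \<Longrightarrow> dist (\<phi>' y) (\<phi>' z) \<le> L * dist y z"
    using lipschitz_nearE[OF lip] by blast
  have "blinfun_apply (\<phi>' 0) = (\<lambda>h. 0)"
    using has_derivative_local_min[OF deriv] nonneg zero by (simp add: always_eventually)
  then have "\<phi>' 0 = 0"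
    by (simp add: blinfun_eqI)
  \<comment> \<open>Convexity bounds \<open>\<phi> h\<close> by the tangent slope at \<open>h\<close>, and \<open>\<phi>' 0 = 0\<close> turns that slope into a Lipschitz increment.\<close>
  have "\<phi> h \<le> L * (norm h)\<^sup>2" if "norm h < \<rho>" for h
  proof -
    have "\<phi> h \<le> (\<phi>' h - \<phi>' 0) h"
      using convex_on_above_tangent[OF convex deriv, of h 0] zero \<open>\<phi>' 0 = 0\<close> by (simp add: blinfun.minus_right)
    also have "\<dots> \<le> norm (\<phi>' h - \<phi>' 0) * norm h"
      using norm_blinfun[of "\<phi>' h - \<phi>' 0" h] by simp
    also have "\<dots> \<le> (L * norm h) * norm h"
      using L[of h 0] that \<open>0 < \<rho>\<close> by (intro mult_right_mono) (auto simp: dist_norm)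
    finally show ?thesis
      by (simp add: power2_eq_square mult.assoc)
  qed
  with \<open>0 < \<rho>\<close> \<open>0 \<le> L\<close> show ?thesis
    by blast
qed

lemma lipschitz_derivative_first_order_bound:
  fixes f :: "'a::real_normed_vector \<Rightarrow> real"
  assumes deriv: "\<And>x. x \<in> S \<Longrightarrow> (f has_derivative blinfun_apply (f' x)) (at x)"
    and lip: "\<And>y z. y \<in> S \<Longrightarrow> z \<in> S \<Longrightarrow> norm (f' y - f' z) \<le> L * norm (y - z)"
    and "0 \<le> L" "convex S" "u \<in> S" "x \<in> S"
  shows "\<bar>f x - f u - f' u (x - u)\<bar> \<le> L * (norm (x - u))\<^sup>2"
proof -
  define g where "g y = f y - f' u y" for y
  have seg: "closed_segment u x \<subseteq> S"
    using \<open>convex S\<close> \<open>u \<in> S\<close> \<open>x \<in> S\<close> by (simp add: closed_segment_subset)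
  have g_deriv: "(g has_derivative blinfun_apply (f' y - f' u)) (at y within closed_segment u x)"
    if "y \<in> closed_segment u x" for y
  proof -
    have "(g has_derivative (\<lambda>h. f' y h - f' u h)) (at y)"
      unfolding g_def using deriv[of y] that seg
      by (intro has_derivative_diff bounded_linear_imp_has_derivative blinfun.bounded_linear_right) auto
    moreover have "blinfun_apply (f' y - f' u) = (\<lambda>h. f' y h - f' u h)"
      by (simp add: fun_eq_iff blinfun.diff_left)
    ultimately show ?thesis
      by (simp add: has_derivative_at_withinI)
  qed
  have g_slope: "onorm (blinfun_apply (f' y - f' u)) \<le> L * norm (x - u)"
    if "y \<in> closed_segment u x" for y
  proof -
    have "norm (f' y - f' u) \<le> L * norm (y - u)"
      using lip that seg \<open>u \<in> S\<close> by blast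
    also have "\<dots> \<le> L * norm (x - u)"
      using segment_bound1[OF that] \<open>0 \<le> L\<close> by (rule mult_left_mono)
    finally show ?thesis
      by (simp add: norm_blinfun.rep_eq)
  qed
  have "norm (g x - g u) \<le> L * norm (x - u) * norm (x - u)"
    using differentiable_bound[OF convex_closed_segment g_deriv g_slope ends_in_segment(2) ends_in_segment(1)] .
  then show ?thesis
    by (simp add: g_def power2_eq_square blinfun.diff_right)
qed

definition gradient :: "('a::euclidean_space \<Rightarrow>\<^sub>L real) \<Rightarrow> 'a" where
  "gradient A = (\<Sum>b\<in>Basis. A b *\<^sub>R b)"

lemma inner_gradient: "gradient A \<bullet> h = A h"
proof -
  have "A h = A (\<Sum>b\<in>Basis. (h \<bullet> b) *\<^sub>R b)"
    by (simp add: euclidean_representation)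
  also have "\<dots> = gradient A \<bullet> h"
    by (simp add: gradient_def blinfun.sum_right blinfun.scaleR_right inner_sum_left inner_commute[of h] mult.commute)
  finally show ?thesis ..
qed

lemma norm_gradient: "norm (gradient A) = norm A"
proof (rule antisym)
  have "(norm (gradient A))\<^sup>2 = A (gradient A)"
    by (simp add: power2_norm_eq_inner inner_gradient)
  also have "\<dots> \<le> norm A * norm (gradient A)"
    using norm_blinfun[of A "gradient A"] by simp
  finally show "norm (gradient A) \<le> norm A"
    by (cases "gradient A = 0") (simp_all add: power2_eq_square)
  show "norm A \<le> norm (gradient A)"
    by (rule norm_blinfun_bound) (simp_all flip: inner_gradient add: Cauchy_Schwarz_ineq2)
qed

lemma minimum_on_convex_imp_directional_derivative_nonneg:
  fixes f :: "'a::real_normed_vector \<Rightarrow> real"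
  assumes deriv: "(f has_derivative blinfun_apply f') (at u)"
    and "convex S" "u \<in> S" and min: "\<forall>y\<in>S. f u \<le> f y" and "y \<in> S"
  shows "0 \<le> f' (y - u)"
proof (rule ccontr)
  assume "\<not> 0 \<le> f' (y - u)"
  then have neg: "f' (y - u) < 0"
    by simp
  have "((\<lambda>t. f (u + t *\<^sub>R (y - u))) has_real_derivative f' (y - u)) (at 0)"
    using has_real_derivative_along_line[of f "\<lambda>_. f'" u 0 "y - u"] deriv by simp
  from DERIV_neg_dec_right[OF this neg]
  obtain d where "0 < d" and d: "\<And>t. 0 < t \<Longrightarrow> t < d \<Longrightarrow> f (u + t *\<^sub>R (y - u)) < f u"
    by auto
  define t where "t = min (d / 2) 1"
  have "0 < t" "t < d" "t \<le> 1"
    using \<open>0 < d\<close> by (auto simp: t_def)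
  have "u + t *\<^sub>R (y - u) = (1 - t) *\<^sub>R u + t *\<^sub>R y"
    by (simp add: algebra_simps)
  also have "\<dots> \<in> S"
    using convexD[OF \<open>convex S\<close> \<open>u \<in> S\<close> \<open>y \<in> S\<close>] \<open>0 < t\<close> \<open>t \<le> 1\<close> by simp
  finally show False
    using min d[OF \<open>0 < t\<close> \<open>t < d\<close>] by fastforce
qed

lemma cball_minimizer_of_linear:
  fixes g x0 u :: "'a::real_inner"
  assumes "g \<noteq> 0" and "u \<in> cball x0 r" and min: "\<forall>y\<in>cball x0 r. 0 \<le> g \<bullet> (y - u)"
  shows "u = x0 - r *\<^sub>R sgn g"
proof -
  define e where "e = sgn g"
  define w where "w = x0 - u"
  have e: "e \<bullet> e = 1" "norm e = 1"
    using \<open>g \<noteq> 0\<close> by (simp_all add: e_def norm_sgn dot_square_norm)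
  have "norm w \<le> r"
    using \<open>u \<in> cball x0 r\<close> by (simp add: w_def dist_norm)
  then have "0 \<le> r" and ww: "w \<bullet> w \<le> r\<^sup>2"
    by (auto simp: power2_norm_eq_inner[symmetric] intro: order_trans[OF norm_ge_zero] power_mono)
  have "x0 - r *\<^sub>R e \<in> cball x0 r"
    using \<open>0 \<le> r\<close> e by (simp add: dist_norm)
  with min have "0 \<le> e \<bullet> (x0 - r *\<^sub>R e - u)"
    using \<open>g \<noteq> 0\<close> by (auto simp: e_def sgn_div_norm zero_le_divide_iff)
  then have ew: "r \<le> e \<bullet> w"
    using e by (simp add: w_def algebra_simps)
  \<comment> \<open>Equality in Cauchy--Schwarz: \<open>w\<close> is \<open>r\<close> times the unit vector \<open>e\<close>.\<close>
  have "(w - r *\<^sub>R e) \<bullet> (w - r *\<^sub>R e) = w \<bullet> w - 2 * r * (e \<bullet> w) + r\<^sup>2"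
    using e by (simp add: inner_commute power2_eq_square algebra_simps)
  also have "\<dots> \<le> 0"
    using ww mult_left_mono[OF ew \<open>0 \<le> r\<close>] by (simp add: power2_eq_square)
  finally have "w - r *\<^sub>R e = 0"
    by (meson inner_gt_zero_iff not_le)
  then show ?thesis
    by (simp add: w_def e_def algebra_simps)
qed

lemma cball_quadratic_support:
  fixes e x x0 :: "'a::real_inner"
  assumes "norm e = 1" and "x \<in> cball x0 r"
  shows "(norm (x - (x0 - r *\<^sub>R e)))\<^sup>2 \<le> 2 * r * (e \<bullet> (x - (x0 - r *\<^sub>R e)))"
proof -
  define d where "d = x - x0"
  have "d \<bullet> d \<le> r\<^sup>2"
    using assms(2) by (simp add: d_def dist_norm norm_minus_commute power_mono flip: power2_norm_eq_inner)
  moreover have "e \<bullet> e = 1"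
    using assms(1) by (simp add: dot_square_norm)
  moreover have "x - (x0 - r *\<^sub>R e) = d + r *\<^sub>R e"
    by (simp add: d_def)
  ultimately show ?thesis
    unfolding power2_norm_eq_inner \<open>x - (x0 - r *\<^sub>R e) = d + r *\<^sub>R e\<close> by (simp add: inner_add_left inner_add_right inner_commute[of d e] algebra_simps power2_eq_square)
qed

lemma minimum_on_cball_quadratic_growth:
  fixes f :: "'a::euclidean_space \<Rightarrow> real"
  assumes deriv: "\<And>x. x \<in> cball x0 r \<Longrightarrow> (f has_derivative blinfun_apply (f' x)) (at x)"
    and lip: "\<And>y z. y \<in> cball x0 r \<Longrightarrow> z \<in> cball x0 r \<Longrightarrow> norm (f' y - f' z) \<le> L * norm (y - z)"
    and "0 \<le> L" "0 < r"
    and u: "u \<in> cball x0 r" and min: "\<forall>y\<in>cball x0 r. f u \<le> f y"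
    and x: "x \<in> cball x0 r"
  shows "f u + (norm (f' u) / (2 * r) - L) * (norm (x - u))\<^sup>2 \<le> f x"
proof -
  have slope: "norm (f' u) / (2 * r) * (norm (x - u))\<^sup>2 \<le> f' u (x - u)"
  proof (cases "f' u = 0")
    case False
    define g where "g = gradient (f' u)"
    have "g \<noteq> 0"
      using False by (metis g_def norm_eq_zero norm_gradient)
    have "\<forall>y\<in>cball x0 r. 0 \<le> g \<bullet> (y - u)"
      using minimum_on_convex_imp_directional_derivative_nonneg[OF deriv[OF u] convex_cball u min]
      by (simp add: g_def inner_gradient)
    then have u_eq: "u = x0 - r *\<^sub>R sgn g"
      using cball_minimizer_of_linear[OF \<open>g \<noteq> 0\<close> u] by blast
    have "(norm (x - u))\<^sup>2 \<le> 2 * r * (sgn g \<bullet> (x - u))"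
      unfolding u_eq using \<open>g \<noteq> 0\<close> x by (intro cball_quadratic_support) (simp_all add: norm_sgn)
    also have "sgn g \<bullet> (x - u) = f' u (x - u) / norm (f' u)"
      by (simp add: sgn_div_norm g_def inner_gradient norm_gradient divide_inverse_commute)
    finally show ?thesis
      using \<open>0 < r\<close> False by (simp add: field_simps)
  qed simp
  have "\<bar>f x - f u - f' u (x - u)\<bar> \<le> L * (norm (x - u))\<^sup>2"
    using lipschitz_derivative_first_order_bound[OF deriv lip \<open>0 \<le> L\<close> convex_cball u x] by blast
  with slope show ?thesis
    by (simp add: algebra_simps)
qed

lemma minimizer_unique_of_growth:
  fixes u v :: "'a::group_add" and f \<phi> :: "'a \<Rightarrow> real"
  assumes growth: "\<forall>x\<in>S. f u \<le> f x - \<phi> (x - u)"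
    and \<phi>_pos: "\<And>h. h \<noteq> 0 \<Longrightarrow> 0 < \<phi> h"
    and "v \<in> S" and "\<forall>x\<in>S. f v \<le> f x" and "u \<in> S"
  shows "v = u"
proof (rule ccontr)
  assume "v \<noteq> u"
  have "f u \<le> f v - \<phi> (v - u)" and "f v \<le> f u"
    using growth assms(3-) by auto
  moreover have "0 < \<phi> (v - u)"
    using \<phi>_pos[of "v - u"] \<open>v \<noteq> u\<close> by simp
  ultimately show False
    by linarith
qed

lemma unique_minimizer_on_small_cball:
  fixes J :: "'a::euclidean_space \<Rightarrow> real" and \<phi> :: "'a \<Rightarrow> real"
  assumes J_deriv: "\<And>x. (J has_derivative blinfun_apply (J' x)) (at x)"
    and lip: "\<And>y z. y \<in> cball x0 r \<Longrightarrow> z \<in> cball x0 r \<Longrightarrow> norm (J' y - J' z) \<le> L * norm (y - z)"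
    and grad: "\<And>x. x \<in> cball x0 r \<Longrightarrow> m \<le> norm (J' x)"
    and \<phi>_quad: "\<And>h. norm h \<le> 2 * r \<Longrightarrow> \<phi> h \<le> K * (norm h)\<^sup>2"
    and \<phi>_pos: "\<And>h. h \<noteq> 0 \<Longrightarrow> 0 < \<phi> h"
    and "0 \<le> L" "0 < r" and small: "2 * r * (L + K) \<le> m"
  shows "\<exists>u. u \<in> cball x0 r \<and> (\<forall>x\<in>cball x0 r. J u \<le> J x)
           \<and> (\<forall>v\<in>cball x0 r. (\<forall>x\<in>cball x0 r. J v \<le> J x) \<longrightarrow> v = u)
           \<and> (\<forall>x\<in>cball x0 r. J u \<le> J x - \<phi> (x - u))"
proof -
  obtain u where u: "u \<in> cball x0 r" and min: "\<forall>y\<in>cball x0 r. J u \<le> J y"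
    using continuous_attains_inf[of "cball x0 r" J] \<open>0 < r\<close>
      has_derivative_continuous_on[OF has_derivative_at_withinI[OF J_deriv]]
    by fastforce
  have "K \<le> norm (J' u) / (2 * r) - L"
    using small grad[OF u] \<open>0 < r\<close> by (simp add: field_simps)
  have growth: "\<forall>x\<in>cball x0 r. J u \<le> J x - \<phi> (x - u)"
  proof
    fix x assume x: "x \<in> cball x0 r"
    have "norm (x - u) \<le> 2 * r"
      using x u norm_triangle_ineq4[of "x - x0" "u - x0"] by (simp add: dist_norm norm_minus_commute)
    then have "\<phi> (x - u) \<le> K * (norm (x - u))\<^sup>2"
      by (rule \<phi>_quad)
    also have "\<dots> \<le> (norm (J' u) / (2 * r) - L) * (norm (x - u))\<^sup>2"
      using \<open>K \<le> norm (J' u) / (2 * r) - L\<close> by (rule mult_right_mono) simp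
    also have "\<dots> \<le> J x - J u"
      using minimum_on_cball_quadratic_growth[OF J_deriv lip \<open>0 \<le> L\<close> \<open>0 < r\<close> u min x] by simp
    finally show "J u \<le> J x - \<phi> (x - u)"
      by simp
  qed
  show ?thesis
  proof (intro exI[of _ u] conjI ballI impI)
    show "v = u" if "v \<in> cball x0 r" and "\<forall>x\<in>cball x0 r. J v \<le> J x" for v
      using minimizer_unique_of_growth[OF growth \<phi>_pos that u] .
  qed (use u min growth in auto)
qed

theorem theorem1p3:
  fixes J :: "'a::euclidean_space \<Rightarrow> real"
    and J' :: "'a \<Rightarrow> 'a \<Rightarrow>\<^sub>L real"
    and \<phi> :: "'a \<Rightarrow> real"
    and \<phi>' :: "'a \<Rightarrow> 'a \<Rightarrow>\<^sub>L real"
    and x0 :: 'a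
  assumes J_deriv: "\<And>x. (J has_derivative blinfun_apply (J' x)) (at x)"
    and J'_cont: "continuous_on UNIV J'"
    and J'_lip: "locally_lipschitz J'"
    and \<phi>_nonneg: "\<And>x. \<phi> x \<ge> 0"
    and \<phi>_deriv: "\<And>x. (\<phi> has_derivative blinfun_apply (\<phi>' x)) (at x)"
    and \<phi>'_cont: "continuous_on UNIV \<phi>'"
    and \<phi>_convex: "convex_on UNIV \<phi>"
    and \<phi>'_lip0: "lipschitz_near \<phi>' 0"
    and \<phi>_zero: "\<phi> -` {0} = {0}"
    and x0: "J' x0 \<noteq> 0"
  shows "\<exists>\<delta>>0. \<forall>r. 0 < r \<and> r < \<delta> \<longrightarrow>
           (\<exists>u. u \<in> cball x0 r \<and> (\<forall>x\<in>cball x0 r. J u \<le> J x)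
              \<and> (\<forall>v\<in>cball x0 r. (\<forall>x\<in>cball x0 r. J v \<le> J x) \<longrightarrow> v = u)
              \<and> (\<forall>x\<in>cball x0 r. J u \<le> J x - \<phi> (x - u)))"
proof -
  have \<phi>_pos: "0 < \<phi> h" if "h \<noteq> 0" for h
    using \<phi>_nonneg[of h] \<phi>_zero that by (metis le_less vimage_singleton_eq singletonD)
  obtain \<rho> K where "0 < \<rho>" "0 \<le> K" and \<phi>_quad: "\<And>h. norm h < \<rho> \<Longrightarrow> \<phi> h \<le> K * (norm h)\<^sup>2"
    using quadratic_bound_near_zero[OF \<phi>_nonneg _ \<phi>_deriv \<phi>_convex \<phi>'_lip0] \<phi>_zero by blast
  define m where "m = norm (J' x0) / 2"
  obtain R1 where "0 < R1" and grad: "\<And>x. x \<in> ball x0 R1 \<Longrightarrow> m \<le> norm (J' x)"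
    using isCont_norm_bounded_below_near[of x0 J'] J'_cont x0
    unfolding m_def by (metis continuous_on_eq_continuous_at open_UNIV UNIV_I)
  obtain R2 L where "0 < R2" "0 \<le> L"
    and lip: "\<And>y z. y \<in> ball x0 R2 \<Longrightarrow> z \<in> ball x0 R2 \<Longrightarrow> norm (J' y - J' z) \<le> L * norm (y - z)"
    using J'_lip unfolding locally_lipschitz_def by (metis lipschitz_nearE dist_norm)
  have "0 < m"
    using x0 by (simp add: m_def)
  define \<delta> where "\<delta> = min (min R1 R2) (min (\<rho> / 2) (m / (2 * (L + K + 1))))"
  show ?thesis
  proof (intro exI[of _ \<delta>] conjI allI impI)
    show "0 < \<delta>"
      using \<open>0 < R1\<close> \<open>0 < R2\<close> \<open>0 < \<rho>\<close> \<open>0 < m\<close> \<open>0 \<le> L\<close> \<open>0 \<le> K\<close> by (simp add: \<delta>_def)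
    fix r assume r: "0 < r \<and> r < \<delta>"
    then have "cball x0 r \<subseteq> ball x0 R1 \<inter> ball x0 R2" "2 * r < \<rho>" "2 * r * (L + K) \<le> m"
      using \<open>0 \<le> L\<close> \<open>0 \<le> K\<close> by (auto simp: \<delta>_def field_simps)
    with r show "\<exists>u. u \<in> cball x0 r \<and> (\<forall>x\<in>cball x0 r. J u \<le> J x)
        \<and> (\<forall>v\<in>cball x0 r. (\<forall>x\<in>cball x0 r. J v \<le> J x) \<longrightarrow> v = u)
        \<and> (\<forall>x\<in>cball x0 r. J u \<le> J x - \<phi> (x - u))"
      using grad lip \<phi>_quad
      by (intro unique_minimizer_on_small_cball[OF J_deriv _ _ _ \<phi>_pos \<open>0 \<le> L\<close>]) (auto simp: subset_iff)
  qed
qed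

end
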